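(* Assume that $(Y,X_1,\dots,X_d)$ has continuous marginal distributions and a Gaussian copula. Let $V=\Phi^{-1}(F_Y(Y))$ and $U_i=\Phi^{-1}(F_{X_i}(X_i))$, $i=1,\dots,d$, so that $(V,U_1,\dots,U_d)$ is Gaussian, and let $a=(a_i)_{i=1}^d$ be a constant vector such that $V=a^\top U+\epsilon$ with $\epsilon$ independent of $U=(U_i)_{i=1}^d$. Then for all $p,q\in(0,1)$, an optimal predictor of $\mathbb{I}(Y>F_Y^{\leftarrow}(p))$ calibrated at level $q$ is $\mathbb{I}(h(X)>F_{h(X)}^{\leftarrow}(q))$, where $h(x)=\sum_{i=1}^d a_i\,\Phi^{-1}(F_{X_i}(x_i))$.
   Context: $\Phi$ is the standard normal distribution function; $F_\xi$ is the distribution function of $\xi$ and $F_\xi^{\leftarrow}(p)=\inf\{y: F_\xi(y)\ge p\}$. A predictor $\mathbb{I}(g(X)>\tau)$ (with $g$ Borel) of an event $\{Y>y_0\}$ is calibrated at level $q$ if $\mathbb{P}(g(X)>\tau)=1-q$; such a predictor is optimal at level $q$ if its precision $\mathbb{P}(Y>y_0\mid g(X)>\tau)$ is at least the precision of every other predictor calibrated at level $q$. *)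

theory Defs
  imports "HOL-Probability.Probability"
begin

definition distr_fun :: "'a measure \<Rightarrow> ('a \<Rightarrow> real) \<Rightarrow> real \<Rightarrow> real" where
  "distr_fun M \<xi> y = measure M {\<omega> \<in> space M. \<xi> \<omega> \<le> y}"

definition gen_inv :: "(real \<Rightarrow> real) \<Rightarrow> real \<Rightarrow> real" where
  "gen_inv F p = Inf {y. F y \<ge> p}"

definition Phi :: "real \<Rightarrow> real" where
  "Phi x = measure (density lborel std_normal_density) {..x}"

definition Phi_inv :: "real \<Rightarrow> real" where
  "Phi_inv p = gen_inv Phi p"

definition normal_score :: "'a measure \<Rightarrow> ('a \<Rightarrow> real) \<Rightarrow> 'a \<Rightarrow> real" where
  "normal_score M \<xi> \<omega> = Phi_inv (distr_fun M \<xi> (\<xi> \<omega>))"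

definition gaussian_rv :: "'a measure \<Rightarrow> ('a \<Rightarrow> real) \<Rightarrow> bool" where
  "gaussian_rv M Z \<longleftrightarrow>
     (\<exists>\<mu> \<sigma>. \<sigma> > 0 \<and> distributed M lborel Z (normal_density \<mu> \<sigma>))
     \<or> (\<exists>c. AE \<omega> in M. Z \<omega> = c)"

text \<open>(Y, X_1..X_d) has a Gaussian copula: the vector of normal scores
  (Phi^{-1}(F_Y(Y)), Phi^{-1}(F_{X_i}(X_i))) is jointly Gaussian, i.e. every
  linear combination is Gaussian.\<close>
definition gaussian_copula :: "'a measure \<Rightarrow> ('a \<Rightarrow> real) \<Rightarrow> ('a \<Rightarrow> real^'d) \<Rightarrow> bool" where
  "gaussian_copula M Y X \<longleftrightarrow>
     (\<forall>c0 (c :: real^'d). gaussian_rv M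
        (\<lambda>\<omega>. c0 * normal_score M Y \<omega> + (\<Sum>i\<in>UNIV. c $ i * normal_score M (\<lambda>\<eta>. X \<eta> $ i) \<omega>)))"

definition calibrated :: "'a measure \<Rightarrow> ('a \<Rightarrow> 'b) \<Rightarrow> ('b \<Rightarrow> real) \<Rightarrow> real \<Rightarrow> real \<Rightarrow> bool" where
  "calibrated M X g \<tau> q \<longleftrightarrow> measure M {\<omega> \<in> space M. g (X \<omega>) > \<tau>} = 1 - q"

definition precision :: "'a measure \<Rightarrow> ('a \<Rightarrow> real) \<Rightarrow> real \<Rightarrow> ('a \<Rightarrow> 'b) \<Rightarrow> ('b \<Rightarrow> real) \<Rightarrow> real \<Rightarrow> real" where
  "precision M Y y0 X g \<tau> =
     measure M {\<omega> \<in> space M. Y \<omega> > y0 \<and> g (X \<omega>) > \<tau>} / measure M {\<omega> \<in> space M. g (X \<omega>) > \<tau>}"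

definition optimal_predictor ::
  "'a measure \<Rightarrow> ('a \<Rightarrow> real) \<Rightarrow> real \<Rightarrow> ('a \<Rightarrow> 'b::topological_space) \<Rightarrow> ('b \<Rightarrow> real) \<Rightarrow> real \<Rightarrow> real \<Rightarrow> bool" where
  "optimal_predictor M Y y0 X g \<tau> q \<longleftrightarrow>
     g \<in> borel_measurable borel \<and> calibrated M X g \<tau> q \<and>
     (\<forall>g' \<tau>'. g' \<in> borel_measurable borel \<and> calibrated M X g' \<tau>' q \<longrightarrow>
         precision M Y y0 X g' \<tau>' \<le> precision M Y y0 X g \<tau>)"

end

theory Submission
  imports Defs
begin

(* The score S = a^T U of the normal scores U of X is a nondegenerate Gaussian variable, so its
   distribution function is continuous and the threshold event T = {S > tau}, tau = F_S^<-(q), has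
   probability exactly 1 - q; this is the only use of Gaussianity. Every X_i is a.s. recovered from its normal
   score through its quantile function, so a calibrated predictor {g(X) > tau'} is a.s. an event A
   in sigma(U) with P(A) = P(T), while {Y > F_Y^<-(p)} is a.s. the event B = {S + eps > v},
   v = Phi^-1(p). On A - T we have S <= tau, so B forces eps > v - tau there; on T - A the event
   eps > v - tau implies B. Since eps is independent of U and P(A - T) = P(T - A),
     P(B n (A - T)) <= P(eps > v - tau) P(A - T) = P(eps > v - tau) P(T - A) <= P(B n (T - A)),
   that is P(B n A) <= P(B n T): the threshold predictor has the larger precision. *)

context cdf_distribution
begin

lemma gen_inv_cdf_eq: "gen_inv (cdf M) = I"
  by (simp add: gen_inv_def[abs_def])

lemma gen_inv_cdf_le_iff: "0 < u \<Longrightarrow> u < 1 \<Longrightarrow> gen_inv (cdf M) u \<le> x \<longleftrightarrow> u \<le> cdf M x"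
  unfolding gen_inv_cdf_eq using pseudoinverse by blast

lemma borel_measurable_gen_inv_cdf[measurable]: "gen_inv (cdf M) \<in> borel_measurable borel"
  unfolding gen_inv_cdf_eq
proof (rule borel_measurable_piecewise_mono[of "{{..0}, {0<..<1}, {1}, {1<..}}"])
  have below: "I u = Inf UNIV" if "u \<le> 0" for u
  proof -
    have "{x. u \<le> cdf M x} = UNIV"
      using that cdf_nonneg by (auto intro: order_trans)
    then show ?thesis by simp
  qed
  have above: "I u = Inf {}" if "1 < u" for u
  proof -
    have "{x. u \<le> cdf M x} = {}"
      using that cdf_bounded_prob by (auto simp: not_le intro: le_less_trans)
    then show ?thesis by simp
  qed
  have "mono_on {..0} I" "mono_on {1} I" "mono_on {1<..} I"
    by (auto intro!: mono_onI simp only: below above)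
  with mono_I show "mono_on c I" if "c \<in> {{..0}, {0<..<1}, {1}, {1<..}}" for c
    using that by (elim insertE) simp_all
qed (auto simp: not_le)

(* M is the image of the uniform distribution on (0,1) under its quantile function (Skorokhod). *)
lemma AE_quantileI:
  assumes "{x. P x} \<in> sets borel" and "\<And>w. 0 < w \<Longrightarrow> w < 1 \<Longrightarrow> P (gen_inv (cdf M) w)"
  shows "AE x in M. P x"
proof -
  let ?\<Omega> = "restrict_space lborel {0<..<1::real}"
  have "sets ?\<Omega> = sets (restrict_space borel {0<..<1})"
    by (simp add: sets_restrict_space)
  then have I_measurable: "I \<in> measurable ?\<Omega> borel"
    using measurable_CI measurable_cong_sets[of ?\<Omega> _ borel borel] by simp
  have "AE w in ?\<Omega>. P (I w)"
    using assms(2) by (intro AE_I2) (simp add: space_restrict_space gen_inv_cdf_eq)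
  then have "AE x in distr ?\<Omega> borel I. P x"
    using AE_distr_iff[OF I_measurable, of P] assms(1) by simp
  then show ?thesis
    by (simp only: distr_I_eq_M)
qed

end

locale atomless_real_distribution = real_distribution +
  assumes measure_singleton: "measure M {x} = 0"
begin

sublocale cdf_distribution ..

lemma cdf_gen_inv:
  assumes "0 < u" "u < 1"
  shows "cdf M (gen_inv (cdf M) u) = u"
proof (rule antisym)
  let ?t = "gen_inv (cdf M) u"
  show "u \<le> cdf M ?t"
    using gen_inv_cdf_le_iff[OF assms, of ?t] by simp
  have lim: "(cdf M \<longlongrightarrow> cdf M ?t) (at_left ?t)"
    using isCont_cdf measure_singleton by (simp add: isCont_def filterlim_at_split)
  have "cdf M x \<le> u" if "x < ?t" for x
    using gen_inv_cdf_le_iff[OF assms, of x] that by linarith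
  then have "eventually (\<lambda>x. cdf M x \<le> u) (at_left ?t)"
    by (intro eventually_at_leftI[of "?t - 1"]) auto
  with lim show "cdf M ?t \<le> u"
    by (rule tendsto_upperbound) simp
qed

lemma gen_inv_cdf_less_iff:
  assumes "0 < p" "p < 1" "0 < u" "u < 1"
  shows "gen_inv (cdf M) p < gen_inv (cdf M) u \<longleftrightarrow> p < u"
proof -
  have "gen_inv (cdf M) u \<le> gen_inv (cdf M) p \<longleftrightarrow> u \<le> p"
    using gen_inv_cdf_le_iff[of u "gen_inv (cdf M) p"] cdf_gen_inv[of p] assms by simp
  then show ?thesis
    by (meson not_le)
qed

lemma AE_cdf_in_unit_interval: "AE x in M. 0 < cdf M x \<and> cdf M x < 1"
  by (rule AE_quantileI) (measurable, simp add: cdf_gen_inv)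

lemma AE_gen_inv_cdf: "AE x in M. gen_inv (cdf M) (cdf M x) = x"
  by (rule AE_quantileI) (measurable, simp add: cdf_gen_inv)

lemma AE_quantile_less_iff:
  assumes "0 < p" "p < 1"
  shows "AE x in M. gen_inv (cdf M) p < x \<longleftrightarrow> p < cdf M x"
  by (rule AE_quantileI) (measurable, simp add: cdf_gen_inv gen_inv_cdf_less_iff assms)

end

lemma atomless_real_distribution_density:
  assumes "prob_space (density lborel f)" and [measurable]: "f \<in> borel_measurable lborel"
  shows "atomless_real_distribution (density lborel f)"
proof -
  interpret prob_space "density lborel f" by fact
  show ?thesis
  proof unfold_locales
    fix x :: real
    have "emeasure (density lborel f) {x} = 0"
      by (subst emeasure_density) (auto intro: nn_integral_null_set finite_imp_null_set_lborel)
    then show "measure (density lborel f) {x} = 0"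
      by (simp add: measure_def)
  qed simp
qed

lemma Phi_eq_cdf: "Phi = cdf (density lborel std_normal_density)"
  by (simp add: Phi_def[abs_def] cdf_def)

interpretation std_normal: atomless_real_distribution "density lborel std_normal_density"
  by (rule atomless_real_distribution_density) (simp_all add: prob_space_normal_density)

lemma Phi_Phi_inv: "0 < u \<Longrightarrow> u < 1 \<Longrightarrow> Phi (Phi_inv u) = u"
  by (simp add: Phi_eq_cdf Phi_inv_def std_normal.cdf_gen_inv)

lemma Phi_inv_less_iff:
  "0 < p \<Longrightarrow> p < 1 \<Longrightarrow> 0 < u \<Longrightarrow> u < 1 \<Longrightarrow> Phi_inv p < Phi_inv u \<longleftrightarrow> p < u"
  by (simp add: Phi_eq_cdf Phi_inv_def std_normal.gen_inv_cdf_less_iff)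

lemma borel_measurable_Phi[measurable]: "Phi \<in> borel_measurable borel"
  by (simp add: Phi_eq_cdf)

lemma borel_measurable_Phi_inv[measurable]: "Phi_inv \<in> borel_measurable borel"
  by (simp add: Phi_eq_cdf Phi_inv_def[abs_def])

lemma borel_measurable_vec_lambda:
  fixes f :: "'a \<Rightarrow> real^'n"
  assumes "\<And>i. (\<lambda>x. f x $ i) \<in> borel_measurable M"
  shows "f \<in> borel_measurable M"
proof (subst borel_measurable_euclidean_space, intro ballI)
  fix b :: "real^'n"
  assume "b \<in> Basis"
  then obtain i where "b = axis i 1"
    by (auto simp: Basis_vec_def)
  then show "(\<lambda>x. f x \<bullet> b) \<in> borel_measurable M"
    using assms[of i] by (simp add: inner_axis)
qed

context prob_space
begin

lemma distr_fun_eq_cdf: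
  assumes "random_variable borel \<xi>"
  shows "distr_fun M \<xi> = cdf (distr M borel \<xi>)"
proof
  fix y
  have "{\<omega> \<in> space M. \<xi> \<omega> \<le> y} = \<xi> -` {..y} \<inter> space M"
    by auto
  then show "distr_fun M \<xi> y = cdf (distr M borel \<xi>) y"
    using assms by (simp add: distr_fun_def cdf_def measure_distr)
qed

lemma atomless_real_distribution_distr:
  assumes "random_variable borel \<xi>" and "\<And>x. isCont (distr_fun M \<xi>) x"
  shows "atomless_real_distribution (distr M borel \<xi>)"
proof -
  interpret D: real_distribution "distr M borel \<xi>"
    using assms(1) by simp
  show ?thesis
    by unfold_locales (use assms in \<open>simp add: distr_fun_eq_cdf D.isCont_cdf\<close>)
qed

lemma borel_measurable_distr_fun[measurable]:
  assumes "random_variable borel \<xi>"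
  shows "distr_fun M \<xi> \<in> borel_measurable borel"
proof -
  interpret D: real_distribution "distr M borel \<xi>"
    using assms by simp
  interpret D: cdf_distribution "distr M borel \<xi>" ..
  show ?thesis
    using D.measurable_C by (simp add: distr_fun_eq_cdf[OF assms])
qed

lemma borel_measurable_gen_inv_distr_fun[measurable]:
  assumes "random_variable borel \<xi>"
  shows "gen_inv (distr_fun M \<xi>) \<in> borel_measurable borel"
proof -
  interpret D: real_distribution "distr M borel \<xi>"
    using assms by simp
  interpret D: cdf_distribution "distr M borel \<xi>" ..
  show ?thesis
    using D.borel_measurable_gen_inv_cdf by (simp add: distr_fun_eq_cdf[OF assms])
qed

lemma borel_measurable_normal_score[measurable]:
  assumes [measurable]: "random_variable borel \<xi>"
  shows "normal_score M \<xi> \<in> borel_measurable M"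
  unfolding normal_score_def[abs_def] by measurable

lemma isCont_distr_fun_gaussian:
  assumes "gaussian_rv M Z" and "\<nexists>c. AE \<omega> in M. Z \<omega> = c"
  shows "isCont (distr_fun M Z) x"
proof -
  obtain \<mu> \<sigma> where "\<sigma> > 0" and Z: "distributed M lborel Z (normal_density \<mu> \<sigma>)"
    using assms unfolding gaussian_rv_def by blast
  have rv: "random_variable borel Z"
    using distributed_measurable[OF Z] by simp
  have "distr M borel Z = distr M lborel Z"
    by (rule distr_cong) simp_all
  also have "\<dots> = density lborel (normal_density \<mu> \<sigma>)"
    using distributed_distr_eq_density[OF Z] .
  finally have distr_eq: "distr M borel Z = density lborel (normal_density \<mu> \<sigma>)" .
  interpret N: atomless_real_distribution "distr M borel Z"
    unfolding distr_eq using \<open>\<sigma> > 0\<close>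
    by (intro atomless_real_distribution_density) (simp_all add: prob_space_normal_density)
  show ?thesis
    using N.isCont_cdf N.measure_singleton by (simp add: distr_fun_eq_cdf[OF rv])
qed

lemma isCont_distr_fun_copula_score:
  fixes X :: "'a \<Rightarrow> real^'n"
  assumes "gaussian_copula M Y X"
    and "\<nexists>c. AE \<omega> in M. (\<Sum>i\<in>UNIV. a $ i * normal_score M (\<lambda>\<eta>. X \<eta> $ i) \<omega>) = c"
  shows "isCont (distr_fun M (\<lambda>\<omega>. \<Sum>i\<in>UNIV. a $ i * normal_score M (\<lambda>\<eta>. X \<eta> $ i) \<omega>)) x"
  using assms(1)[unfolded gaussian_copula_def, rule_format, of 0 a] assms(2)
  by (simp add: isCont_distr_fun_gaussian)

lemma prob_quantile_less:
  assumes "random_variable borel \<xi>" and "\<And>x. isCont (distr_fun M \<xi>) x"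
    and "0 < q" and "q < 1"
  shows "prob {\<omega> \<in> space M. gen_inv (distr_fun M \<xi>) q < \<xi> \<omega>} = 1 - q"
proof -
  interpret D: atomless_real_distribution "distr M borel \<xi>"
    using assms(1,2) by (rule atomless_real_distribution_distr)
  let ?t = "gen_inv (distr_fun M \<xi>) q"
  have "{\<omega> \<in> space M. ?t < \<xi> \<omega>} = space M - {\<omega> \<in> space M. \<xi> \<omega> \<le> ?t}"
    by auto
  then have "prob {\<omega> \<in> space M. ?t < \<xi> \<omega>} = 1 - distr_fun M \<xi> ?t"
    using assms(1) by (simp add: prob_compl distr_fun_def)
  also have "distr_fun M \<xi> ?t = q"
    using D.cdf_gen_inv assms(3,4) by (simp add: distr_fun_eq_cdf[OF assms(1)])
  finally show ?thesis .
qed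

lemma AE_quantile_less_iff_normal_score:
  assumes "random_variable borel \<xi>" and "\<And>x. isCont (distr_fun M \<xi>) x"
    and "0 < p" and "p < 1"
  shows "AE \<omega> in M. gen_inv (distr_fun M \<xi>) p < \<xi> \<omega> \<longleftrightarrow> Phi_inv p < normal_score M \<xi> \<omega>"
proof -
  interpret D: atomless_real_distribution "distr M borel \<xi>"
    using assms(1,2) by (rule atomless_real_distribution_distr)
  note [measurable] = assms(1) D.measurable_C D.borel_measurable_gen_inv_cdf
  let ?F = "cdf (distr M borel \<xi>)"
  have "AE x in distr M borel \<xi>. (gen_inv ?F p < x \<longleftrightarrow> p < ?F x) \<and> 0 < ?F x \<and> ?F x < 1"
    using D.AE_quantile_less_iff[OF assms(3,4)] D.AE_cdf_in_unit_interval by eventually_elim simp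
  then have "AE \<omega> in M. (gen_inv ?F p < \<xi> \<omega> \<longleftrightarrow> p < ?F (\<xi> \<omega>))
      \<and> 0 < ?F (\<xi> \<omega>) \<and> ?F (\<xi> \<omega>) < 1"
    by (subst (asm) AE_distr_iff) measurable
  then show ?thesis
    by eventually_elim (simp add: normal_score_def distr_fun_eq_cdf[OF assms(1)] Phi_inv_less_iff assms(3,4))
qed

lemma AE_quantile_Phi_normal_score:
  assumes "random_variable borel \<xi>" and "\<And>x. isCont (distr_fun M \<xi>) x"
  shows "AE \<omega> in M. gen_inv (distr_fun M \<xi>) (Phi (normal_score M \<xi> \<omega>)) = \<xi> \<omega>"
proof -
  interpret D: atomless_real_distribution "distr M borel \<xi>"
    using assms by (rule atomless_real_distribution_distr)
  note [measurable] = assms(1) D.measurable_C D.borel_measurable_gen_inv_cdf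
  let ?F = "cdf (distr M borel \<xi>)"
  have "AE x in distr M borel \<xi>. gen_inv ?F (?F x) = x \<and> 0 < ?F x \<and> ?F x < 1"
    using D.AE_gen_inv_cdf D.AE_cdf_in_unit_interval by eventually_elim simp
  then have "AE \<omega> in M. gen_inv ?F (?F (\<xi> \<omega>)) = \<xi> \<omega> \<and> 0 < ?F (\<xi> \<omega>) \<and> ?F (\<xi> \<omega>) < 1"
    by (subst (asm) AE_distr_iff) measurable
  then show ?thesis
    by eventually_elim (simp add: normal_score_def distr_fun_eq_cdf[OF assms(1)] Phi_Phi_inv)
qed

lemma prob_threshold_event_maximal:
  fixes s :: "'b \<Rightarrow> real"
  assumes [measurable]: "U \<in> measurable M N" "s \<in> borel_measurable N" "random_variable borel \<epsilon>" "D \<in> sets N"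
    and indep: "indep_set (sets (vimage_algebra (space M) \<epsilon> borel)) (sets (vimage_algebra (space M) U N))"
    and same_prob: "prob {\<omega> \<in> space M. U \<omega> \<in> D} = prob {\<omega> \<in> space M. \<tau> < s (U \<omega>)}"
  shows "prob {\<omega> \<in> space M. v < s (U \<omega>) + \<epsilon> \<omega> \<and> U \<omega> \<in> D}
    \<le> prob {\<omega> \<in> space M. v < s (U \<omega>) + \<epsilon> \<omega> \<and> \<tau> < s (U \<omega>)}"
proof -
  define B where "B = {\<omega> \<in> space M. v < s (U \<omega>) + \<epsilon> \<omega>}"
  define A where "A = {\<omega> \<in> space M. U \<omega> \<in> D}"
  define T where "T = {\<omega> \<in> space M. \<tau> < s (U \<omega>)}"
  define E where "E = {\<omega> \<in> space M. v - \<tau> < \<epsilon> \<omega>}"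
  have [measurable]: "A \<in> events" "B \<in> events" "T \<in> events" "E \<in> events"
    unfolding A_def B_def T_def E_def by measurable
  have "E = \<epsilon> -` {v - \<tau><..} \<inter> space M"
    by (auto simp: E_def)
  then have E_sets: "E \<in> sets (vimage_algebra (space M) \<epsilon> borel)"
    by (simp add: in_vimage_algebra)
  have "A - T = U -` (D - {u \<in> space N. \<tau> < s u}) \<inter> space M"
    "T - A = U -` ({u \<in> space N. \<tau> < s u} - D) \<inter> space M"
    using measurable_space[of U M N] by (auto simp: A_def T_def)
  then have U_sets: "A - T \<in> sets (vimage_algebra (space M) U N)" "T - A \<in> sets (vimage_algebra (space M) U N)"
    by (auto intro!: in_vimage_algebra)
  have "prob (A - T) = prob (T - A)"
    using same_prob finite_measure_Diff'[of A T] finite_measure_Diff'[of T A]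
    by (simp add: A_def T_def Int_commute)
  have "prob (B \<inter> (A - T)) \<le> prob (E \<inter> (A - T))"
    by (rule finite_measure_mono) (auto simp: B_def E_def T_def)
  also have "\<dots> = prob E * prob (A - T)"
    using indep_setD[OF indep E_sets U_sets(1)] .
  also have "\<dots> = prob E * prob (T - A)"
    by (simp add: \<open>prob (A - T) = prob (T - A)\<close>)
  also have "\<dots> = prob (E \<inter> (T - A))"
    using indep_setD[OF indep E_sets U_sets(2)] by simp
  also have "\<dots> \<le> prob (B \<inter> (T - A))"
    by (rule finite_measure_mono) (auto simp: B_def E_def T_def)
  finally have "prob (B \<inter> (A - T)) \<le> prob (B \<inter> (T - A))" .
  moreover have "prob (B \<inter> (A - T)) = prob (B \<inter> A) - prob (B \<inter> A \<inter> T)"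
    using finite_measure_Diff'[of "B \<inter> A" T] by (simp add: Int_Diff)
  moreover have "B \<inter> T \<inter> A = B \<inter> A \<inter> T"
    by blast
  then have "prob (B \<inter> (T - A)) = prob (B \<inter> T) - prob (B \<inter> A \<inter> T)"
    using finite_measure_Diff'[of "B \<inter> T" A] by (simp add: Int_Diff)
  ultimately have "prob (B \<inter> A) \<le> prob (B \<inter> T)"
    by linarith
  moreover have "{\<omega> \<in> space M. v < s (U \<omega>) + \<epsilon> \<omega> \<and> U \<omega> \<in> D} = B \<inter> A"
    "{\<omega> \<in> space M. v < s (U \<omega>) + \<epsilon> \<omega> \<and> \<tau> < s (U \<omega>)} = B \<inter> T"
    by (auto simp: A_def B_def T_def)
  ultimately show ?thesis
    by simp
qed

lemma optimal_predictor_score_threshold: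
  fixes X :: "'a \<Rightarrow> 'b::topological_space" and s :: "'c \<Rightarrow> real"
  assumes [measurable]: "Y \<in> borel_measurable M" "random_variable borel X" "U \<in> measurable M N"
    "R \<in> measurable N borel" "s \<in> borel_measurable N" "random_variable borel \<epsilon>" "h \<in> borel_measurable borel"
    and indep: "indep_set (sets (vimage_algebra (space M) \<epsilon> borel)) (sets (vimage_algebra (space M) U N))"
    and X_eq: "AE \<omega> in M. X \<omega> = R (U \<omega>)"
    and Y_event: "AE \<omega> in M. y0 < Y \<omega> \<longleftrightarrow> v < s (U \<omega>) + \<epsilon> \<omega>"
    and h_score: "\<And>\<omega>. \<omega> \<in> space M \<Longrightarrow> h (X \<omega>) = s (U \<omega>)"
    and calibrated: "calibrated M X h \<tau> q"
  shows "optimal_predictor M Y y0 X h \<tau> q"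
  unfolding optimal_predictor_def
proof (intro conjI allI impI; (elim conjE)?)
  fix g' \<tau>'
  assume [measurable]: "g' \<in> borel_measurable borel" and calibrated': "calibrated M X g' \<tau>' q"
  define D where "D = {u \<in> space N. \<tau>' < g' (R u)}"
  have [measurable]: "D \<in> sets N"
    unfolding D_def by measurable
  have U_space: "U \<omega> \<in> space N" if "\<omega> \<in> space M" for \<omega>
    using measurable_space[OF assms(3) that] .
  have threshold_eq: "{\<omega> \<in> space M. \<tau> < h (X \<omega>)} = {\<omega> \<in> space M. \<tau> < s (U \<omega>)}"
    using h_score by auto
  have "prob {\<omega> \<in> space M. U \<omega> \<in> D} = prob {\<omega> \<in> space M. \<tau>' < g' (X \<omega>)}"
    using X_eq by (intro measure_eq_AE) (auto simp: D_def U_space)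
  also have "\<dots> = prob {\<omega> \<in> space M. \<tau> < s (U \<omega>)}"
    using calibrated calibrated' threshold_eq by (simp add: calibrated_def)
  finally have same_prob: "prob {\<omega> \<in> space M. U \<omega> \<in> D} = prob {\<omega> \<in> space M. \<tau> < s (U \<omega>)}" .
  have "prob {\<omega> \<in> space M. y0 < Y \<omega> \<and> \<tau>' < g' (X \<omega>)}
      = prob {\<omega> \<in> space M. v < s (U \<omega>) + \<epsilon> \<omega> \<and> U \<omega> \<in> D}"
    using X_eq Y_event by (intro measure_eq_AE) (auto simp: D_def U_space)
  also have "\<dots> \<le> prob {\<omega> \<in> space M. v < s (U \<omega>) + \<epsilon> \<omega> \<and> \<tau> < s (U \<omega>)}"
    using indep same_prob by (intro prob_threshold_event_maximal) measurable
  also have "\<dots> = prob {\<omega> \<in> space M. y0 < Y \<omega> \<and> \<tau> < h (X \<omega>)}"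
    using Y_event by (intro measure_eq_AE) (auto simp: h_score)
  finally have "prob {\<omega> \<in> space M. y0 < Y \<omega> \<and> \<tau>' < g' (X \<omega>)}
      \<le> prob {\<omega> \<in> space M. y0 < Y \<omega> \<and> \<tau> < h (X \<omega>)}" .
  moreover have "0 \<le> 1 - q"
    using calibrated measure_nonneg[of M "{\<omega> \<in> space M. \<tau> < h (X \<omega>)}"]
    by (simp add: calibrated_def)
  ultimately show "precision M Y y0 X g' \<tau>' \<le> precision M Y y0 X h \<tau>"
    using calibrated calibrated' by (simp add: precision_def calibrated_def divide_right_mono)
qed (use calibrated in auto)

lemma AE_eq_quantiles_of_normal_scores:
  fixes X :: "'a \<Rightarrow> real^'n"
  assumes "random_variable borel X"
    and "\<And>i x. isCont (distr_fun M (\<lambda>\<omega>. X \<omega> $ i)) x"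
  shows "AE \<omega> in M. X \<omega> =
    (\<chi> i. gen_inv (distr_fun M (\<lambda>\<eta>. X \<eta> $ i)) (Phi (normal_score M (\<lambda>\<eta>. X \<eta> $ i) \<omega>)))"
proof -
  have "AE \<omega> in M. \<forall>i\<in>UNIV.
      gen_inv (distr_fun M (\<lambda>\<eta>. X \<eta> $ i)) (Phi (normal_score M (\<lambda>\<eta>. X \<eta> $ i) \<omega>)) = X \<omega> $ i"
    using assms(2) by (subst AE_ball_countable)
      (auto intro!: AE_quantile_Phi_normal_score measurable_compose[OF assms(1)])
  then show ?thesis
    by eventually_elim (simp add: vec_eq_iff)
qed

end

theorem corollary1:
  fixes M :: "'a measure" and Y :: "'a \<Rightarrow> real" and X :: "'a \<Rightarrow> real^'d"
    and a :: "real^'d" and \<epsilon> :: "'a \<Rightarrow> real" and p q :: real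
  assumes "prob_space M"
    and "Y \<in> borel_measurable M" and "X \<in> borel_measurable M"
    and "\<And>y. isCont (distr_fun M Y) y"
    and "\<And>i y. isCont (distr_fun M (\<lambda>\<omega>. X \<omega> $ i)) y"
    and "gaussian_copula M Y X"
    and "\<epsilon> \<in> borel_measurable M"
    and "prob_space.indep_set M (sets (vimage_algebra (space M) \<epsilon> borel))
           (sets (vimage_algebra (space M)
              (\<lambda>\<omega>. \<chi> i. normal_score M (\<lambda>\<eta>. X \<eta> $ i) \<omega>) (borel :: (real^'d) measure)))"
    and "AE \<omega> in M. normal_score M Y \<omega> =
           (\<Sum>i\<in>UNIV. a $ i * normal_score M (\<lambda>\<eta>. X \<eta> $ i) \<omega>) + \<epsilon> \<omega>"
    and "\<not> (\<exists>c. AE \<omega> in M. (\<Sum>i\<in>UNIV. a $ i * normal_score M (\<lambda>\<eta>. X \<eta> $ i) \<omega>) = c)"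
    and "0 < p" and "p < 1" and "0 < q" and "q < 1"
  shows "let h = (\<lambda>x :: real^'d. \<Sum>i\<in>UNIV. a $ i * Phi_inv (distr_fun M (\<lambda>\<eta>. X \<eta> $ i) (x $ i)))
         in optimal_predictor M Y (gen_inv (distr_fun M Y) p) X h
              (gen_inv (distr_fun M (\<lambda>\<omega>. h (X \<omega>))) q) q"
proof -
  interpret prob_space M by fact
  note [measurable] = assms(2,3,7)
  define U where "U = (\<lambda>\<omega>. \<chi> i. normal_score M (\<lambda>\<eta>. X \<eta> $ i) \<omega>)"
  define s where "s u = (\<Sum>i\<in>UNIV. a $ i * u $ i)" for u :: "real^'d"
  define h where
    "h = (\<lambda>x :: real^'d. \<Sum>i\<in>UNIV. a $ i * Phi_inv (distr_fun M (\<lambda>\<eta>. X \<eta> $ i) (x $ i)))"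
  define R where "R u = (\<chi> i. gen_inv (distr_fun M (\<lambda>\<eta>. X \<eta> $ i)) (Phi (u $ i)))" for u :: "real^'d"
  have [measurable]: "random_variable borel (\<lambda>\<omega>. X \<omega> $ i)" for i
    by (rule measurable_compose[OF assms(3) borel_measurable_nth])
  have measurability[measurable]: "U \<in> borel_measurable M" "h \<in> borel_measurable borel"
    "R \<in> borel_measurable borel" "s \<in> borel_measurable borel"
    unfolding U_def h_def R_def s_def by (intro borel_measurable_vec_lambda, simp, measurable)+
  have h_score: "h (X \<omega>) = s (U \<omega>)" for \<omega>
    by (simp add: h_def s_def U_def normal_score_def)
  have score_continuous: "isCont (distr_fun M (\<lambda>\<omega>. h (X \<omega>))) x" for x
    using isCont_distr_fun_copula_score[OF assms(6,10)] by (simp add: h_def normal_score_def)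
  have "calibrated M X h (gen_inv (distr_fun M (\<lambda>\<omega>. h (X \<omega>))) q) q"
    unfolding calibrated_def by (rule prob_quantile_less[OF _ score_continuous assms(13,14)]) measurable
  moreover have "AE \<omega> in M. gen_inv (distr_fun M Y) p < Y \<omega> \<longleftrightarrow> Phi_inv p < s (U \<omega>) + \<epsilon> \<omega>"
    using AE_quantile_less_iff_normal_score[OF assms(2,4,11,12)] assms(9)
    by eventually_elim (simp add: s_def U_def)
  moreover have "AE \<omega> in M. X \<omega> = R (U \<omega>)"
    using AE_eq_quantiles_of_normal_scores[OF assms(3,5)] by (simp add: R_def U_def)
  ultimately have "optimal_predictor M Y (gen_inv (distr_fun M Y) p) X h
      (gen_inv (distr_fun M (\<lambda>\<omega>. h (X \<omega>))) q) q"
    using assms(8)[folded U_def] h_score measurability assms(2,3,7)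
    by (intro optimal_predictor_score_threshold[where N = borel and U = U and s = s and R = R]) simp_all
  then show ?thesis
    unfolding Let_def h_def .
qed

end
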